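(* Let $m\ge3$, let $\lambda=\{\mu_{\mathbf a},\mu_{\mathbf b},\mu_{\mathbf c}\}$ be a D-J class over $P_m$ and $J=(j_1,\dots,j_m)\in\mathbb{Z}_{>0}^m$. Then $$|\tilde E(\lambda,J)|=(2^{|\mu_{\mathbf a}|-1})^{w_{\mathbf a}}+(2^{|\mu_{\mathbf b}|-1})^{w_{\mathbf b}}+(2^{|\mu_{\mathbf c}|-1})^{w_{\mathbf c}}-2,$$ where $w_i=0$ if $\mu_i=\varnothing$ and $w_i=\sum_{k\in\mu_i}(j_k-1)$ otherwise.
   Context: $P_m$ is the simplicial complex on $[m]$ with facets $\{i,i+1\}$ mod $m$. A D-J class over $P_m$ is an unordered weak partition $\lambda=\{\mu_{\mathbf a},\mu_{\mathbf b},\mu_{\mathbf c}\}$ of $[m]$ (parts may be empty) into non-consecutive sets (no part contains $\{i,i+1\bmod m\}$); $p,q$ are $\lambda$-equivalent if they lie in the same part. An e-set compatible with $\lambda$ is $(p,S)$ with $p\in[m]$, $S\subseteq[m]$ of even cardinality, and $\{p\}\cup S$ contained in one part. Two such e-sets $(p,S),(q,T)$ are type 1 $\lambda$-related if $S=\varnothing$ or $T=\varnothing$ or $p,q$ are $\lambda$-equivalent. $\tilde E(\lambda,J)$ is the set of sequences $(1,S^1_1),\dots,(1,S^1_{j_1-1}),(2,S^2_1),\dots,(2,S^2_{j_2-1}),\dots,(m,S^m_1),\dots,(m,S^m_{j_m-1})$ of e-sets compatible with $\lambda$ whose members are pairwise type 1 $\lambda$-related. *)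

theory Defs
  imports Main
begin

definition facet_Pm :: "nat \<Rightarrow> nat \<Rightarrow> nat \<Rightarrow> bool" where
  "facet_Pm m i j \<longleftrightarrow> (1 \<le> i \<and> i < m \<and> j = i + 1) \<or> (i = m \<and> j = 1)"

definition non_consecutive :: "nat \<Rightarrow> nat set \<Rightarrow> bool" where
  "non_consecutive m X \<longleftrightarrow> (\<forall>i j. facet_Pm m i j \<longrightarrow> \<not> ({i, j} \<subseteq> X))"

definition DJ_class :: "nat \<Rightarrow> nat set \<Rightarrow> nat set \<Rightarrow> nat set \<Rightarrow> bool" where
  "DJ_class m A B C \<longleftrightarrow>
     A \<union> B \<union> C = {1..m} \<and> A \<inter> B = {} \<and> A \<inter> C = {} \<and> B \<inter> C = {} \<and>
     non_consecutive m A \<and> non_consecutive m B \<and> non_consecutive m C"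

definition lam_equiv :: "nat set \<Rightarrow> nat set \<Rightarrow> nat set \<Rightarrow> nat \<Rightarrow> nat \<Rightarrow> bool" where
  "lam_equiv A B C p q \<longleftrightarrow> ({p, q} \<subseteq> A \<or> {p, q} \<subseteq> B \<or> {p, q} \<subseteq> C)"

definition eset_compat :: "nat \<Rightarrow> nat set \<Rightarrow> nat set \<Rightarrow> nat set \<Rightarrow> nat \<Rightarrow> nat set \<Rightarrow> bool" where
  "eset_compat m A B C p S \<longleftrightarrow>
     p \<in> {1..m} \<and> S \<subseteq> {1..m} \<and> even (card S) \<and>
     (insert p S \<subseteq> A \<or> insert p S \<subseteq> B \<or> insert p S \<subseteq> C)"

definition type1_related :: "nat set \<Rightarrow> nat set \<Rightarrow> nat set \<Rightarrow> nat \<times> nat set \<Rightarrow> nat \<times> nat set \<Rightarrow> bool" where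
  "type1_related A B C e f \<longleftrightarrow> snd e = {} \<or> snd f = {} \<or> lam_equiv A B C (fst e) (fst f)"

text \<open>Positions of the sequence: (k,i) with 1 <= k <= m and 1 <= i <= j_k - 1; the entry at
  position (k,i) is the e-set (k, S^k_i). A sequence is encoded by the function (k,i) \<mapsto> S^k_i,
  taken to be {} outside the positions (so that sequences correspond bijectively to such functions).\<close>
definition positions :: "nat \<Rightarrow> (nat \<Rightarrow> nat) \<Rightarrow> (nat \<times> nat) set" where
  "positions m J = {(k, i). k \<in> {1..m} \<and> 1 \<le> i \<and> i + 1 \<le> J k}"

definition E_tilde :: "nat \<Rightarrow> nat set \<Rightarrow> nat set \<Rightarrow> nat set \<Rightarrow> (nat \<Rightarrow> nat) \<Rightarrow> (nat \<times> nat \<Rightarrow> nat set) set" where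
  "E_tilde m A B C J =
     {f. (\<forall>x. x \<notin> positions m J \<longrightarrow> f x = {}) \<and>
         (\<forall>x \<in> positions m J. eset_compat m A B C (fst x) (f x)) \<and>
         (\<forall>x \<in> positions m J. \<forall>y \<in> positions m J.
            type1_related A B C (fst x, f x) (fst y, f y))}"

definition wt :: "nat set \<Rightarrow> (nat \<Rightarrow> nat) \<Rightarrow> nat" where
  "wt X J = (if X = {} then 0 else (\<Sum>k\<in>X. J k - 1))"

end

theory Submission
  imports Defs "HOL-Library.FuncSet"
begin

text \<open>Once a sequence in \<open>\<tilde>E(\<lambda>,J)\<close> has a non-empty set at a position of some part \<open>X\<close>,
  type 1 relatedness forces every other non-empty set onto a position of \<open>X\<close> as well, and
  compatibility makes each of these sets an even subset of \<open>X\<close>. Hence \<open>\<tilde>E(\<lambda>,J)\<close> is the union, over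
  the three parts, of the sequences supported on the \<open>w\<^sub>X\<close> positions of \<open>X\<close> with values among
  the \<open>2^(|X|-1)\<close> even subsets of \<open>X\<close>; these three sets pairwise meet only in the empty sequence,
  which accounts for the \<open>-2\<close>.\<close>

lemma card_even_subsets:
  assumes "finite X"
  shows "card {S. S \<subseteq> X \<and> even (card S)} = 2 ^ (card X - 1)"
proof (cases "X = {}")
  case True
  then show ?thesis by (simp cong: conj_cong)
next
  case False
  have "2 ^ card X = card (Pow X)"
    using assms by (simp add: card_Pow)
  also have "Pow X = {S. S \<subseteq> X \<and> even (card S)} \<union> {S. S \<subseteq> X \<and> odd (card S)}"
    by auto
  also have "card \<dots> = card {S. S \<subseteq> X \<and> even (card S)} + card {S. S \<subseteq> X \<and> odd (card S)}"
    using assms by (intro card_Un_disjoint) auto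
  also have "\<dots> = 2 * card {S. S \<subseteq> X \<and> even (card S)}"
    using card_subsupersets_even_odd[of X "{}"] assms False by (simp add: psubset_eq)
  finally show ?thesis
    using False assms by (cases "card X") auto
qed

lemma card_functions_with_default:
  assumes "finite P"
  shows "card {f. (\<forall>x. x \<notin> P \<longrightarrow> f x = d) \<and> (\<forall>x\<in>P. f x \<in> V)} = card V ^ card P"
proof -
  let ?ext = "\<lambda>g x. if x \<in> P then g x else d"
  have "{f. (\<forall>x. x \<notin> P \<longrightarrow> f x = d) \<and> (\<forall>x\<in>P. f x \<in> V)} = ?ext ` (P \<rightarrow>\<^sub>E V)"
  proof (intro equalityI subsetI)
    fix f assume f: "f \<in> {f. (\<forall>x. x \<notin> P \<longrightarrow> f x = d) \<and> (\<forall>x\<in>P. f x \<in> V)}"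
    then have "f = ?ext (restrict f P)" by auto
    with f show "f \<in> ?ext ` (P \<rightarrow>\<^sub>E V)" by auto
  qed auto
  moreover have "inj_on ?ext (P \<rightarrow>\<^sub>E V)"
  proof (rule inj_onI)
    fix g h assume gh: "g \<in> P \<rightarrow>\<^sub>E V" "h \<in> P \<rightarrow>\<^sub>E V" "?ext g = ?ext h"
    show "g = h"
    proof (rule PiE_ext[OF gh(1,2)])
      show "g x = h x" if "x \<in> P" for x
        using fun_cong[OF gh(3), of x] that by simp
    qed
  qed
  ultimately show ?thesis
    using assms by (simp add: card_image card_PiE)
qed

lemma card_Un3_common_point:
  assumes "finite U" "finite V" "finite W"
    and "U \<inter> V = {z}" "U \<inter> W = {z}" "V \<inter> W = {z}"
  shows "card (U \<union> V \<union> W) + 2 = card U + card V + card W"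
proof -
  have "(U \<union> V) \<inter> W = {z}" using assms(5,6) by blast
  then show ?thesis
    using assms card_Un_Int[of U V] card_Un_Int[of "U \<union> V" W] by simp
qed

definition positions_over :: "nat \<Rightarrow> (nat \<Rightarrow> nat) \<Rightarrow> nat set \<Rightarrow> (nat \<times> nat) set" where
  "positions_over m J X = {x \<in> positions m J. fst x \<in> X}"

definition E_tilde_part :: "nat \<Rightarrow> (nat \<Rightarrow> nat) \<Rightarrow> nat set \<Rightarrow> (nat \<times> nat \<Rightarrow> nat set) set" where
  "E_tilde_part m J X =
     {f. (\<forall>x. x \<notin> positions_over m J X \<longrightarrow> f x = {}) \<and>
         (\<forall>x \<in> positions_over m J X. f x \<in> {S. S \<subseteq> X \<and> even (card S)})}"

lemma positions_over_eq_Sigma: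
  assumes "X \<subseteq> {1..m}"
  shows "positions_over m J X = Sigma X (\<lambda>k. {1..J k - 1})"
  using assms unfolding positions_over_def positions_def by auto

lemma card_E_tilde_part:
  assumes "X \<subseteq> {1..m}"
  shows "card (E_tilde_part m J X) = (2 ^ (card X - 1)) ^ wt X J"
proof -
  have "finite X"
    using assms finite_subset by blast
  then have "finite (positions_over m J X)"
    unfolding positions_over_eq_Sigma[OF assms] by blast
  have "card (positions_over m J X) = wt X J"
    unfolding positions_over_eq_Sigma[OF assms] wt_def
    using card_SigmaI[OF \<open>finite X\<close>, of "\<lambda>k. {1..J k - 1}"] by auto
  then show ?thesis
    unfolding E_tilde_part_def card_functions_with_default[OF \<open>finite (positions_over m J X)\<close>]
    using card_even_subsets[OF \<open>finite X\<close>] by simp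
qed

lemma empty_sequence_in_E_tilde_part: "(\<lambda>_. {}) \<in> E_tilde_part m J X"
  unfolding E_tilde_part_def by simp

lemma finite_E_tilde_part:
  assumes "X \<subseteq> {1..m}"
  shows "finite (E_tilde_part m J X)"
proof -
  have "card (E_tilde_part m J X) > 0"
    unfolding card_E_tilde_part[OF assms] by simp
  then show ?thesis
    by (rule card_ge_0_finite)
qed

lemma E_tilde_part_Int:
  assumes "X \<inter> Y = {}"
  shows "E_tilde_part m J X \<inter> E_tilde_part m J Y = {\<lambda>_. {}}"
proof -
  have "positions_over m J X \<inter> positions_over m J Y = {}"
    using assms unfolding positions_over_def by auto
  then have "f = (\<lambda>_. {})" if "f \<in> E_tilde_part m J X" "f \<in> E_tilde_part m J Y" for f
    using that unfolding E_tilde_part_def fun_eq_iff by blast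
  then show ?thesis
    using empty_sequence_in_E_tilde_part by blast
qed

lemma lam_equiv_iff_mem_part:
  assumes "A \<inter> B = {}" "A \<inter> C = {}" "B \<inter> C = {}" "X \<in> {A, B, C}" "p \<in> X"
  shows "lam_equiv A B C p q \<longleftrightarrow> q \<in> X"
  using assms unfolding lam_equiv_def by blast

lemma eset_compat_iff_subset_part:
  assumes "A \<inter> B = {}" "A \<inter> C = {}" "B \<inter> C = {}" "X \<in> {A, B, C}" "X \<subseteq> {1..m}" "p \<in> X"
  shows "eset_compat m A B C p S \<longleftrightarrow> S \<subseteq> X \<and> even (card S)"
proof -
  have "insert p S \<subseteq> A \<or> insert p S \<subseteq> B \<or> insert p S \<subseteq> C \<longleftrightarrow> S \<subseteq> X"
    using assms(1-4,6) by blast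
  then show ?thesis
    using assms(5,6) unfolding eset_compat_def by auto
qed

lemma E_tilde_part_subset_E_tilde:
  assumes parts: "A \<union> B \<union> C = {1..m}" and disj: "A \<inter> B = {}" "A \<inter> C = {}" "B \<inter> C = {}"
    and X: "X \<in> {A, B, C}"
  shows "E_tilde_part m J X \<subseteq> E_tilde m A B C J"
proof
  fix f assume f: "f \<in> E_tilde_part m J X"
  have sub: "Y \<subseteq> {1..m}" if "Y \<in> {A, B, C}" for Y
    using that parts by blast
  have outside_positions: "f x = {}" if "x \<notin> positions m J" for x
    using f that unfolding E_tilde_part_def positions_over_def by (cases x) auto
  have outside_part: "f x = {}" if "fst x \<notin> X" for x
    using f that unfolding E_tilde_part_def positions_over_def by (cases x) auto
  have inside: "f x \<subseteq> X \<and> even (card (f x))" if "x \<in> positions m J" "fst x \<in> X" for x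
    using f that unfolding E_tilde_part_def positions_over_def by (cases x) auto
  have "eset_compat m A B C (fst x) (f x)" if "x \<in> positions m J" for x
  proof -
    have "fst x \<in> A \<union> B \<union> C"
      using that parts unfolding positions_def by (cases x) auto
    then obtain Y where Y: "Y \<in> {A, B, C}" "fst x \<in> Y"
      by blast
    show ?thesis
    proof (cases "fst x \<in> X")
      case True
      then show ?thesis
        using eset_compat_iff_subset_part[OF disj X sub[OF X] True] inside[OF that] by simp
    next
      case False
      then show ?thesis
        using eset_compat_iff_subset_part[OF disj Y(1) sub[OF Y(1)] Y(2)] outside_part by simp
    qed
  qed
  moreover have "type1_related A B C (fst x, f x) (fst y, f y)" for x y
  proof (cases "fst x \<in> X \<and> fst y \<in> X")
    case True
    then show ?thesis
      using lam_equiv_iff_mem_part[OF disj X] unfolding type1_related_def by simp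
  next
    case False
    then show ?thesis
      using outside_part[of x] outside_part[of y] unfolding type1_related_def by auto
  qed
  ultimately show "f \<in> E_tilde m A B C J"
    using outside_positions unfolding E_tilde_def by simp
qed

lemma E_tilde_subset_E_tilde_part:
  assumes parts: "A \<union> B \<union> C = {1..m}" and disj: "A \<inter> B = {}" "A \<inter> C = {}" "B \<inter> C = {}"
    and f: "f \<in> E_tilde m A B C J" and x0: "f x0 \<noteq> {}"
  obtains X where "X \<in> {A, B, C}" "f \<in> E_tilde_part m J X"
proof -
  have outside_positions: "f x = {}" if "x \<notin> positions m J" for x
    using f that unfolding E_tilde_def by (cases x) auto
  have compat: "eset_compat m A B C (fst x) (f x)" if "x \<in> positions m J" for x
    using f that unfolding E_tilde_def by simp
  have related: "type1_related A B C (fst x, f x) (fst y, f y)"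
    if "x \<in> positions m J" "y \<in> positions m J" for x y
    using f that unfolding E_tilde_def by simp
  have x0_pos: "x0 \<in> positions m J"
    using outside_positions x0 by blast
  then have "fst x0 \<in> A \<union> B \<union> C"
    using parts unfolding positions_def by (cases x0) auto
  then obtain X where X: "X \<in> {A, B, C}" "fst x0 \<in> X"
    by blast
  have "X \<subseteq> {1..m}"
    using X(1) parts by blast
  have outside_part: "f x = {}" if "x \<in> positions m J" "fst x \<notin> X" for x
    using related[OF x0_pos that(1)] x0 that(2) lam_equiv_iff_mem_part[OF disj X]
    unfolding type1_related_def by simp
  have "f x = {}" if "x \<notin> positions_over m J X" for x
    using that outside_positions outside_part unfolding positions_over_def by blast
  moreover have "f x \<subseteq> X \<and> even (card (f x))" if "x \<in> positions_over m J X" for x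
    using that compat eset_compat_iff_subset_part[OF disj X(1) \<open>X \<subseteq> {1..m}\<close>]
    unfolding positions_over_def by blast
  ultimately have "f \<in> E_tilde_part m J X"
    unfolding E_tilde_part_def by simp
  with X(1) show ?thesis
    using that by blast
qed

lemma E_tilde_eq_Un_E_tilde_part:
  assumes "A \<union> B \<union> C = {1..m}" "A \<inter> B = {}" "A \<inter> C = {}" "B \<inter> C = {}"
  shows "E_tilde m A B C J = E_tilde_part m J A \<union> E_tilde_part m J B \<union> E_tilde_part m J C"
proof (intro equalityI subsetI)
  fix f assume f: "f \<in> E_tilde m A B C J"
  show "f \<in> E_tilde_part m J A \<union> E_tilde_part m J B \<union> E_tilde_part m J C"
  proof (cases "f = (\<lambda>_. {})")
    case True
    then show ?thesis
      using empty_sequence_in_E_tilde_part by blast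
  next
    case False
    then obtain x0 where "f x0 \<noteq> {}"
      by blast
    then show ?thesis
      using E_tilde_subset_E_tilde_part[OF assms f] by blast
  qed
qed (use E_tilde_part_subset_E_tilde[OF assms] in blast)

theorem proposition6:
  fixes m :: nat and A B C :: "nat set" and J :: "nat \<Rightarrow> nat"
  assumes "m \<ge> 3"
    and "DJ_class m A B C"
    and "\<forall>k \<in> {1..m}. J k > 0"
  shows "card (E_tilde m A B C J) =
           (2 ^ (card A - 1)) ^ wt A J + (2 ^ (card B - 1)) ^ wt B J
           + (2 ^ (card C - 1)) ^ wt C J - 2"
proof -
  have parts: "A \<union> B \<union> C = {1..m}" and disj: "A \<inter> B = {}" "A \<inter> C = {}" "B \<inter> C = {}"
    using assms(2) unfolding DJ_class_def by auto
  then have sub: "A \<subseteq> {1..m}" "B \<subseteq> {1..m}" "C \<subseteq> {1..m}"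
    by auto
  have "card (E_tilde m A B C J) + 2
      = card (E_tilde_part m J A) + card (E_tilde_part m J B) + card (E_tilde_part m J C)"
    unfolding E_tilde_eq_Un_E_tilde_part[OF parts disj]
    by (rule card_Un3_common_point[where z = "\<lambda>_. {}"])
      (simp_all add: finite_E_tilde_part[OF sub(1)] finite_E_tilde_part[OF sub(2)]
        finite_E_tilde_part[OF sub(3)] E_tilde_part_Int disj)
  then show ?thesis
    unfolding card_E_tilde_part[OF sub(1)] card_E_tilde_part[OF sub(2)] card_E_tilde_part[OF sub(3)]
    by simp
qed

end
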